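(* Let $p$ be a prime and let $k\in\mathbb{Q}_p$ with $|k|_p>1$. For a vertex $v$ of the branch $T_{\mathbb{Z}_p}$ (described in the context) at depth $\ell$, define $$\phi(v)=\frac{p}{p+1}\int_{\mathbb{Z}_p} d\mu(x)\, e^{2\pi i\{kx\}}\, p^{-d_C(x,v)},$$ where $d\mu$ is the Haar measure on $\mathbb{Q}_p$ normalized by $\mu(\mathbb{Z}_p)=1$. If $0\le \ell< -\operatorname{ord}_p(k)-2$, then $\phi(v)=0$.
   Context: For $x\in\mathbb{Q}_p$, $\operatorname{ord}_p(x)$ is the $p$-adic valuation and $|x|_p=p^{-\operatorname{ord}_p(x)}$. The fractional part $\{\cdot\}:\mathbb{Q}_p\to\mathbb{Q}$ is defined by $\{\sum_{j=m}^\infty a_jp^j\}=\sum_{j=m}^{-1}a_jp^j$ (digits $a_j\in\{0,\dots,p-1\}$), interpreted as a rational number and equal to $0$ if $m\ge 0$. The Bruhat--Tits tree $T_p$ of $\mathbb{Q}_p$ is the $(p+1)$-regular tree whose space of ends is $\mathbb{P}^1(\mathbb{Q}_p)$. Fix the centerpoint $C$ to be the vertex below which the boundary ends form $\mathbb{Z}_p$. The branch $T_{\mathbb{Z}_p}$ below $C$ is described as follows: its vertices at depth $n\ge 0$ (distance $n$ from $C$) are the balls $a+p^n\mathbb{Z}_p$ with $a\in\mathbb{Z}_p$ (so $C=\mathbb{Z}_p$ is at depth $0$), each depth-$n$ ball being joined by an edge to the $p$ balls of radius $p^{-n-1}$ it contains; a boundary point $x\in\mathbb{Z}_p$ is the end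 given by the nested sequence of balls containing $x$. For $x\in\mathbb{Z}_p$ and a vertex $v$ at depth $\ell$ of this branch, let $j\le \ell$ be the largest depth such that $x$ lies in the ball of the ancestor of $v$ at depth $j$ (so $j=\ell$ iff $x\in v$). The regularized distance (the graph distance from $v$ to the end $x$, renormalized so that it vanishes at $v=C$) is $d_C(x,v)=(\ell-j)-j=\ell-2j$. *)

theory Defs
  imports "HOL-Probability.Probability"
begin

text \<open>Model of Z_p: a p-adic integer x = sum_i x_i p^i is its digit sequence
  x :: nat => nat (digits in {0..<p}).  The normalized Haar measure on Z_p
  is the infinite product of the uniform measures on the digits.\<close>

definition zp_trunc :: "nat \<Rightarrow> (nat \<Rightarrow> nat) \<Rightarrow> nat \<Rightarrow> nat" where
  "zp_trunc p x n = (\<Sum>i<n. x i * p ^ i)"   \<comment> \<open>x mod p^n as a natural number\<close>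

definition is_padic_digits :: "nat \<Rightarrow> (nat \<Rightarrow> nat) \<Rightarrow> bool" where
  "is_padic_digits p x \<longleftrightarrow> (\<forall>i. x i < p)"

definition haar_Zp :: "nat \<Rightarrow> (nat \<Rightarrow> nat) measure" where
  "haar_Zp p = PiM UNIV (\<lambda>_. measure_pmf (pmf_of_set {0..<p}))"

text \<open>For k = p^(-m) * u with u a p-adic unit (digits u) and m >= 1, so that
  ord_p k = -m: the fractional part {k x} of k x for x in Z_p.\<close>

definition frac_kx :: "nat \<Rightarrow> nat \<Rightarrow> (nat \<Rightarrow> nat) \<Rightarrow> (nat \<Rightarrow> nat) \<Rightarrow> real" where
  "frac_kx p m u x = real ((zp_trunc p u m * zp_trunc p x m) mod p ^ m) / real (p ^ m)"

text \<open>Vertex v at depth l of the branch below C: the ball a + p^l Z_p, with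
  representative a in {0..<p^l}.  anc_depth gives the largest j <= l such that x
  lies in the ancestor ball (a mod p^j) + p^j Z_p.\<close>

definition anc_depth :: "nat \<Rightarrow> nat \<Rightarrow> nat \<Rightarrow> (nat \<Rightarrow> nat) \<Rightarrow> nat" where
  "anc_depth p l a x = (GREATEST j. j \<le> l \<and> zp_trunc p x j = a mod p ^ j)"

definition dC :: "nat \<Rightarrow> nat \<Rightarrow> nat \<Rightarrow> (nat \<Rightarrow> nat) \<Rightarrow> int" where
  "dC p l a x = int l - 2 * int (anc_depth p l a x)"

definition phi :: "nat \<Rightarrow> nat \<Rightarrow> (nat \<Rightarrow> nat) \<Rightarrow> nat \<Rightarrow> nat \<Rightarrow> complex" where
  "phi p m u l a = complex_of_real (real p / real (p + 1)) *
     (\<integral>x. exp (2 * complex_of_real pi * \<i> * complex_of_real (frac_kx p m u x))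
           * complex_of_real (real p powr (- real_of_int (dC p l a x))) \<partial>haar_Zp p)"

end

theory Submission
  imports Defs
begin

text \<open>The distance \<open>dC\<close> from a vertex of depth \<open>l\<close> only sees the first \<open>l\<close> digits of \<open>x\<close>,
  while the character \<open>x \<mapsto> exp (2 \<pi> i {k x})\<close> has conductor \<open>p ^ m\<close>. As long as \<open>l < m\<close>,
  changing the digit \<open>x_(m-1)\<close> by \<open>t\<close> leaves \<open>dC\<close> unchanged and multiplies the character by
  \<open>\<zeta> ^ t\<close> with \<open>\<zeta> = exp (2 \<pi> i u_0 / p)\<close>, a primitive \<open>p\<close>-th root of unity since \<open>u_0\<close> is a
  unit. Integrating out that digit first (Fubini for the product measure) gives the factor
  \<open>(1/p) (1 + \<zeta> + \<dots> + \<zeta> ^ (p - 1)) = 0\<close>.\<close>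

lemma exp_two_pi_i_of_nat: "exp (2 * complex_of_real pi * \<i> * of_nat n) = 1"
proof -
  have "exp (2 * complex_of_real pi * \<i> * of_nat n) = exp (2 * complex_of_real pi * \<i>) ^ n"
    by (simp add: exp_of_nat_mult[symmetric] mult_ac)
  then show ?thesis by simp
qed

lemma exp_two_pi_i_mod_div:
  assumes "q > 0"
  shows "exp (2 * complex_of_real pi * \<i> * complex_of_real (real (N mod q) / real q))
       = exp (2 * complex_of_real pi * \<i> * complex_of_real (real N / real q))"
proof -
  have "real N = real (N div q) * real q + real (N mod q)"
    by (metis of_nat_add of_nat_mult div_mult_mod_eq)
  then have "real N / real q = real (N div q) + real (N mod q) / real q"
    using assms by (simp add: field_simps)
  then have "exp (2 * complex_of_real pi * \<i> * complex_of_real (real N / real q))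
     = exp (2 * complex_of_real pi * \<i> * of_nat (N div q)) *
       exp (2 * complex_of_real pi * \<i> * complex_of_real (real (N mod q) / real q))"
    by (simp add: distrib_left exp_add[symmetric])
  then show ?thesis by (simp add: exp_two_pi_i_of_nat)
qed

lemma sum_powers_root_of_unity_eq_0:
  assumes "q > 0" "\<not> q dvd U"
  shows "(\<Sum>t<q. exp (2 * complex_of_real pi * \<i> * complex_of_real (real U / real q)) ^ t) = 0"
proof -
  define w where "w = exp (2 * complex_of_real pi * \<i> * complex_of_real (real U / real q))"
  have "w ^ q = exp (2 * complex_of_real pi * \<i> * of_nat U)"
    unfolding w_def exp_of_nat_mult[symmetric] using assms(1) by (simp add: field_simps)
  then have "w ^ q = 1" by (simp add: exp_two_pi_i_of_nat)
  moreover have "w \<noteq> 1"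
  proof
    assume "w = 1"
    then obtain n :: int where "2 * pi * (real U / real q) = of_int (2 * n) * pi"
      unfolding w_def exp_eq_1 by auto
    then have "real U = real q * of_int n" using assms(1) by (simp add: field_simps)
    then have "int U = int q * n" by (metis of_int_eq_iff of_int_mult of_int_of_nat_eq)
    then show False using assms(2) by (metis dvd_triv_left int_dvd_int_iff)
  qed
  ultimately show ?thesis using geometric_sum[of w q] unfolding w_def by simp
qed

lemma zp_trunc_fun_upd: "j \<le> k \<Longrightarrow> zp_trunc p (X(k := t)) j = zp_trunc p X j"
  unfolding zp_trunc_def by (intro sum.cong) auto

lemma zp_trunc_fun_upd_Suc: "zp_trunc p (X(k := t)) (Suc k) = zp_trunc p X k + t * p ^ k"
  using zp_trunc_fun_upd[of k k p X t] unfolding zp_trunc_def by simp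

lemma zp_trunc_mod_base: "m > 0 \<Longrightarrow> zp_trunc p u m mod p = u 0 mod p"
proof -
  assume "m > 0"
  then obtain n where m: "m = Suc n" by (cases m) auto
  have "zp_trunc p u m = u 0 + p * (\<Sum>i<n. u (Suc i) * p ^ i)"
    unfolding zp_trunc_def m sum.lessThan_Suc_shift by (simp add: sum_distrib_left mult_ac)
  then show ?thesis by simp
qed

lemma dC_fun_upd: "l \<le> k \<Longrightarrow> dC p l a (X(k := t)) = dC p l a X"
  unfolding dC_def anc_depth_def
  by (intro arg_cong[where f = "\<lambda>j. int l - 2 * int j"] arg_cong[where f = Greatest] ext)
    (auto simp: zp_trunc_fun_upd)

lemma exp_frac_kx_fun_upd:
  assumes "p > 0"
  shows "exp (2 * complex_of_real pi * \<i> * complex_of_real (frac_kx p (Suc k) u (X(k := t))))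
    = exp (2 * complex_of_real pi * \<i> *
        complex_of_real (real (zp_trunc p u (Suc k) * zp_trunc p X k) / real (p ^ Suc k)))
      * exp (2 * complex_of_real pi * \<i> * complex_of_real (real (zp_trunc p u (Suc k)) / real p)) ^ t"
proof -
  define U where "U = zp_trunc p u (Suc k)"
  define c where "c = 2 * complex_of_real pi * \<i>"
  have "real (U * (zp_trunc p X k + t * p ^ k)) / real (p ^ Suc k)
      = real (U * zp_trunc p X k) / real (p ^ Suc k) + real t * (real U / real p)"
    using assms by (simp add: field_simps)
  then have shift: "c * complex_of_real (real (U * (zp_trunc p X k + t * p ^ k)) / real (p ^ Suc k))
      = c * complex_of_real (real (U * zp_trunc p X k) / real (p ^ Suc k))
        + of_nat t * (c * complex_of_real (real U / real p))"
    by (simp add: algebra_simps)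
  have "exp (c * complex_of_real (frac_kx p (Suc k) u (X(k := t))))
      = exp (c * complex_of_real (real (U * (zp_trunc p X k + t * p ^ k)) / real (p ^ Suc k)))"
    unfolding frac_kx_def zp_trunc_fun_upd_Suc U_def[symmetric] c_def
    using assms by (intro exp_two_pi_i_mod_div) simp
  also have "\<dots> = exp (c * complex_of_real (real (U * zp_trunc p X k) / real (p ^ Suc k)))
      * exp (c * complex_of_real (real U / real p)) ^ t"
    unfolding shift by (simp only: exp_add exp_of_nat_mult)
  finally show ?thesis unfolding U_def c_def .
qed

definition phi_integrand :: "nat \<Rightarrow> nat \<Rightarrow> (nat \<Rightarrow> nat) \<Rightarrow> nat \<Rightarrow> nat \<Rightarrow> (nat \<Rightarrow> nat) \<Rightarrow> complex" where
  "phi_integrand p m u l a x =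
     exp (2 * complex_of_real pi * \<i> * complex_of_real (frac_kx p m u x))
     * complex_of_real (real p powr (- real_of_int (dC p l a x)))"

lemma phi_eq_integral:
  "phi p m u l a = complex_of_real (real p / real (p + 1)) *
     (\<integral>x. phi_integrand p m u l a x \<partial>haar_Zp p)"
  unfolding phi_def phi_integrand_def ..

lemma phi_integrand_fun_upd:
  assumes "p > 0" "l \<le> k"
  shows "phi_integrand p (Suc k) u l a (X(k := t)) = phi_integrand p (Suc k) u l a (X(k := 0)) *
     exp (2 * complex_of_real pi * \<i> * complex_of_real (real (zp_trunc p u (Suc k)) / real p)) ^ t"
proof -
  have "exp (2 * complex_of_real pi * \<i> * complex_of_real (frac_kx p (Suc k) u (X(k := t))))
    = exp (2 * complex_of_real pi * \<i> * complex_of_real (frac_kx p (Suc k) u (X(k := 0))))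
      * exp (2 * complex_of_real pi * \<i> * complex_of_real (real (zp_trunc p u (Suc k)) / real p)) ^ t"
    unfolding exp_frac_kx_fun_upd[OF assms(1)] by simp
  then show ?thesis
    unfolding phi_integrand_def dC_fun_upd[OF assms(2)] by (simp only: ac_simps)
qed

lemma sum_phi_integrand_digit_eq_0:
  assumes "p > 0" "\<not> p dvd u 0" "l \<le> k"
  shows "(\<Sum>t<p. phi_integrand p (Suc k) u l a (X(k := t))) = 0"
proof -
  define w where "w = exp (2 * complex_of_real pi * \<i> *
    complex_of_real (real (zp_trunc p u (Suc k)) / real p))"
  have "\<not> p dvd zp_trunc p u (Suc k)"
    using assms(2) zp_trunc_mod_base[of "Suc k" p u] by (metis dvd_eq_mod_eq_0 zero_less_Suc)
  then have geometric: "(\<Sum>t<p. w ^ t) = 0"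
    unfolding w_def using assms(1) by (rule sum_powers_root_of_unity_eq_0[rotated])
  have "(\<Sum>t<p. phi_integrand p (Suc k) u l a (X(k := t)))
      = (\<Sum>t<p. phi_integrand p (Suc k) u l a (X(k := 0)) * w ^ t)"
    unfolding w_def by (intro sum.cong refl phi_integrand_fun_upd assms(1,3))
  also have "\<dots> = 0"
    by (simp only: sum_distrib_left[symmetric] geometric mult_zero_right)
  finally show ?thesis .
qed

lemma integral_pmf_of_set_eq_0:
  fixes f :: "'a \<Rightarrow> 'b::{banach, second_countable_topology}"
  assumes "finite S" "S \<noteq> {}" "(\<Sum>x\<in>S. f x) = 0"
  shows "(\<integral>x. f x \<partial>measure_pmf (pmf_of_set S)) = 0"
proof -
  have "(\<integral>x. f x \<partial>measure_pmf (pmf_of_set S)) = (\<Sum>x\<in>S. pmf (pmf_of_set S) x *\<^sub>R f x)"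
    using assms(1,2) by (intro integral_measure_pmf) auto
  also have "\<dots> = (1 / real (card S)) *\<^sub>R (\<Sum>x\<in>S. f x)"
    using assms(1,2) by (simp add: scaleR_sum_right)
  finally show ?thesis using assms(3) by simp
qed

text \<open>Fubini over one coordinate: \<open>X \<mapsto> (X k, X)\<close> splits the product measure into the
  \<open>k\<close>-th factor times the product over the remaining coordinates.\<close>

lemma integral_PiM_eq_0_by_coordinate:
  fixes F :: "('i \<Rightarrow> 'a) \<Rightarrow> 'b::{banach, second_countable_topology}"
  assumes M: "prob_space M" and fiber: "\<And>X. (\<integral>x. F (X(k := x)) \<partial>M) = 0"
  shows "(\<integral>X. F X \<partial>PiM UNIV (\<lambda>_. M)) = 0"
proof (cases "integrable (PiM UNIV (\<lambda>_. M)) F")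
  case True
  define N where "N = PiM (UNIV - {k}) (\<lambda>_. M)"
  define T where "T = (\<lambda>(x, X). X(k := x) :: 'i \<Rightarrow> 'a)"
  interpret PM: prob_space M by (fact M)
  interpret PN: prob_space N unfolding N_def by (intro prob_space_PiM) (rule M)
  interpret PP: pair_sigma_finite M N ..
  have ins: "insert k (UNIV - {k}) = UNIV" by auto
  have T_distr: "distr (M \<Otimes>\<^sub>M N) (PiM UNIV (\<lambda>_. M)) T = PiM UNIV (\<lambda>_. M)"
    using distr_pair_PiM_eq_PiM[of "UNIV - {k}" "\<lambda>_. M" k] M unfolding ins N_def T_def by simp
  have T_meas: "T \<in> measurable (M \<Otimes>\<^sub>M N) (PiM UNIV (\<lambda>_. M))"
    unfolding T_def split_beta' N_def by (rule measurable_fun_upd[where J = "UNIV - {k}"]) auto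
  have F_meas: "F \<in> borel_measurable (PiM UNIV (\<lambda>_. M))"
    using True by (rule borel_measurable_integrable)
  have "integrable (M \<Otimes>\<^sub>M N) (\<lambda>z. F (T z))"
    using True T_distr integrable_distr_eq[OF T_meas F_meas] by simp
  then have int: "integrable (M \<Otimes>\<^sub>M N) (\<lambda>(x, X). F (X(k := x)))"
    by (simp add: T_def split_beta')
  have "(\<integral>X. F X \<partial>PiM UNIV (\<lambda>_. M)) = (\<integral>z. F (T z) \<partial>(M \<Otimes>\<^sub>M N))"
    using T_distr integral_distr[OF T_meas F_meas] by simp
  also have "\<dots> = (\<integral>X. (\<integral>x. F (X(k := x)) \<partial>M) \<partial>N)"
    unfolding T_def split_beta' using PP.integral_snd[OF int] by (simp add: split_beta')
  finally show ?thesis by (simp add: fiber)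
qed (simp add: not_integrable_integral_eq)

theorem mainTheorem1:
  fixes p m l a :: nat and u :: "nat \<Rightarrow> nat"
  assumes "prime p"
    and "is_padic_digits p u" and "u 0 \<noteq> 0"
    and "m \<ge> 1"
    and "a < p ^ l"
    and "int l < - (- int m) - 2"
  shows "phi p m u l a = 0"
proof -
  define k where "k = m - 1"
  have m: "m = Suc k" and lk: "l \<le> k"
    using assms(4,6) unfolding k_def by simp_all
  have "p > 0" using assms(1) prime_gt_0_nat by blast
  have "\<not> p dvd u 0"
    using assms(2,3) unfolding is_padic_digits_def by (meson dvd_imp_le not_le neq0_conv)
  have "(\<integral>x. phi_integrand p m u l a (X(k := x)) \<partial>measure_pmf (pmf_of_set {0..<p})) = 0" for X
    unfolding m using \<open>p > 0\<close> \<open>\<not> p dvd u 0\<close> lk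
    by (intro integral_pmf_of_set_eq_0) (auto simp: atLeast0LessThan sum_phi_integrand_digit_eq_0)
  then have "(\<integral>x. phi_integrand p m u l a x \<partial>haar_Zp p) = 0"
    unfolding haar_Zp_def by (intro integral_PiM_eq_0_by_coordinate prob_space_measure_pmf)
  then show ?thesis by (simp add: phi_eq_integral)
qed

end
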